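(* Let an FTTC mechanism satisfy stepwise equal-endowment equal treatment. Then for every FEE problem, the output assignment $p$ satisfies equal-endowment no envy: for all $i,j\in I$ with $\omega_i=\omega_j$, $p_i\succsim^{sd}_i p_j$ and $p_j\succsim^{sd}_j p_i$.
   Context: Fractional endowment exchange (FEE) problem: a tuple $(I,O,\succsim_I,\omega)$ where $I$ is a finite set of agents, $O$ a finite set of objects, each agent $i$ has a complete and transitive (possibly non-strict) preference relation $\succsim_i$ over $O$ with asymmetric part $\succ_i$ and symmetric part $\sim_i$, and $\omega=(\omega_{i,o})_{i\in I,o\in O}$ is an endowment matrix with $\omega_{i,o}\in[0,1]$, $\sum_{o\in O}\omega_{i,o}\le 1$ for each $i$, and $q_o=\sum_{i\in I}\omega_{i,o}$ an integer for each $o$. An assignment is a nonnegative matrix $p=(p_{i,o})$ with $\sum_i p_{i,o}\le q_o$ for all $o$ and $\sum_o p_{i,o}\le 1$ for all $i$; $p_i=(p_{i,o})_{o\in O}$ is $i$'s lottery; $\omega_i=(\omega_{i,o})_{o\in O}$. For vectors $l,l'\in\mathbb R^O_+$, $l\succsim^{sd}_i l'$ means $\sum_{o'\succsim_i o}l_{o'}\ge\sum_{o'\succsim_i o}l'_{o'}$ for all $o\in O$. FTTC (Fractional Top Trading Cycle) on the full preference domain. Initialize $\omega(0)=\omega$, $p(0)=0$, $O(0)=O$. At step $d\ge1$ (with $O(d-1)\ne\emptyset$): (i) Labeling. Put $T_0=O(d-1)$. For $k=1,2,\dots$: let $L_k$ be the set of agents $i\notin L_1\cup\dots\cup L_{k-1}$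 for which there exist $o\in T_{k-1}$ and $o'\in O\setminus(T_0\cup\dots\cup T_{k-1})$ with $p_{i,o'}(d-1)>0$ and $o\sim_i o'$; for $i\in L_k$ let $\tilde O_i(d-1)$ be the set of all such $o'$ for this $i$, and let $T_k=\bigcup_{i\in L_k}\tilde O_i(d-1)$. Stop at the first $k$ with $L_k=\emptyset$. Set $L(d-1)=\bigcup_k L_k$, $\tilde O(d-1)=\bigcup_{k\ge1}T_k$, $\overline{O}(d-1)=O(d-1)\cup\tilde O(d-1)$, and $\tilde O_i(d-1)=\emptyset$ for $i\notin L(d-1)$. (ii) Pointing. The active agents are $I(d-1)=L(d-1)\cup\{i\in I:\sum_o\omega_{i,o}(d-1)>0\}$. For $i\in I(d-1)$ let $B_i$ be the set of $\succsim_i$-maximal elements of $\overline{O}(d-1)$, let $k_i$ be the least $k\ge0$ with $B_i\cap T_k\ne\emptyset$, and let $A_i(d)=B_i\cap T_{k_i}$. (iii) Trading. The mechanism chooses (possibly depending on the history): a ratio matrix $\lambda(d)=(\lambda_{i,o}(d))_{i\in I(d-1),o\in\overline{O}(d-1)}$, nonnegative, with $\sum_{i\in I(d-1)}\lambda_{i,o}(d)=1$ for each $o\in\overline O(d-1)$, $\lambda_{i,o}(d)>0$ only if $\omega_{i,o}(d-1)>0$ (for $o\in O(d-1)$) and only if $o\in\tilde O_i(d-1)$ (for $o\in\tilde O(d-1)$); a quota matrix $\beta(d)$ on $I(d-1)\times O(d-1)$ with $0\le\beta_{i,o}(d)\le\omega_{i,o}(d-1)$; a division matrix $\gamma(d)$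 on $I(d-1)\times\overline O(d-1)$, nonnegative, with $\sum_o\gamma_{i,o}(d)=1$ and $\gamma_{i,o}(d)>0$ only if $o\in A_i(d)$. Let $x^*(d)=(x^*_a(d))_{a\in I(d-1)\cup\overline O(d-1)}$ be the maximum (componentwise largest) nonnegative solution of $x_o=\sum_{i\in I(d-1)}\gamma_{i,o}(d)x_i$ for all $o\in\overline O(d-1)$ and $x_i=\sum_{o\in\overline O(d-1)}\lambda_{i,o}(d)x_o$ for all $i\in I(d-1)$, subject to $\lambda_{i,o}(d)x_o\le\beta_{i,o}(d)$ for $o\in O(d-1)$ and $\lambda_{i,o}(d)x_o\le p_{i,o}(d-1)$ for $o\in\tilde O(d-1)$. For $i\in I(d-1)$: $\omega_{i,o}(d)=\omega_{i,o}(d-1)-\lambda_{i,o}(d)x^*_o(d)$ if $o\in O(d-1)$ and $0$ otherwise; $p_{i,o}(d)=p_{i,o}(d-1)-\mathbf 1[o\in\tilde O_i(d-1)]\lambda_{i,o}(d)x^*_o(d)+\gamma_{i,o}(d)x^*_i(d)$ (with $\gamma_{i,o}(d)=0$ for $o\notin\overline O(d-1)$). For $i\notin I(d-1)$, $\omega_i(d)=\omega_i(d-1)$, $p_i(d)=p_i(d-1)$. Let $O(d)=\{o\in O(d-1):\sum_i\omega_{i,o}(d)>0\}$. If $O(d)=\emptyset$ stop and output $p(d)$; otherwise go to step $d+1$. (Standing assumption: the maximum solution exists at each step and the procedure ends after finitely many steps.) An FTTC mechanism is specified by a rule choosing $\lambda(d),\beta(d),\gamma(d)$ at every step. Stepwise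 equal-endowment equal treatment (stepwise EEET): at every step $d$, for all $i,j\in I(d-1)$, if $\omega_i(d-1)=\omega_j(d-1)$ then $\lambda_{i,o}(d)=\lambda_{j,o}(d)$ for all $o\in O(d-1)$. *)

theory Defs
  imports Complex_Main
begin

(* Agents have type 'i, objects type 'ob.  An FEE problem is (I, Obj, R, w):
   R i a b  means  a \<succsim>_i b ; w is the endowment matrix (zero outside I x Obj). *)

type_synonym ('i,'ob) mat = "'i \<Rightarrow> 'ob \<Rightarrow> real"
type_synonym ('i,'ob) pref = "'i \<Rightarrow> 'ob \<Rightarrow> 'ob \<Rightarrow> bool"
(* state after step d:  (\<omega>(d), p(d), Obj(d)) *)
type_synonym ('i,'ob) st = "('i,'ob) mat \<times> ('i,'ob) mat \<times> 'ob set"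
(* choice at a step:  (\<lambda>(d), \<beta>(d), \<gamma>(d)) *)
type_synonym ('i,'ob) choice = "('i,'ob) mat \<times> ('i,'ob) mat \<times> ('i,'ob) mat"
(* a rule: given the problem and the history of states (\<omega>(0),p(0),Obj(0)),...,(\<omega>(d-1),p(d-1),Obj(d-1)),
   chooses the matrices used at step d *)
type_synonym ('i,'ob) rule =
  "'i set \<Rightarrow> 'ob set \<Rightarrow> ('i,'ob) pref \<Rightarrow> ('i,'ob) mat \<Rightarrow> ('i,'ob) st list \<Rightarrow> ('i,'ob) choice"

definition fee_problem :: "'i set \<Rightarrow> 'ob set \<Rightarrow> ('i,'ob) pref \<Rightarrow> ('i,'ob) mat \<Rightarrow> bool" where
  "fee_problem I Obj R w \<longleftrightarrow>
     finite I \<and> finite Obj \<and>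
     (\<forall>i\<in>I. (\<forall>a\<in>Obj. \<forall>b\<in>Obj. R i a b \<or> R i b a) \<and>
             (\<forall>a\<in>Obj. \<forall>b\<in>Obj. \<forall>c\<in>Obj. R i a b \<longrightarrow> R i b c \<longrightarrow> R i a c)) \<and>
     (\<forall>i ob. i \<notin> I \<or> ob \<notin> Obj \<longrightarrow> w i ob = 0) \<and>
     (\<forall>i\<in>I. \<forall>ob\<in>Obj. 0 \<le> w i ob \<and> w i ob \<le> 1) \<and>
     (\<forall>i\<in>I. (\<Sum>ob\<in>Obj. w i ob) \<le> 1) \<and>
     (\<forall>ob\<in>Obj. (\<Sum>i\<in>I. w i ob) \<in> \<int>)"

definition indiff :: "('i,'ob) pref \<Rightarrow> 'i \<Rightarrow> 'ob \<Rightarrow> 'ob \<Rightarrow> bool" where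
  "indiff R i a b \<longleftrightarrow> R i a b \<and> R i b a"

definition sd_geq :: "'ob set \<Rightarrow> ('i,'ob) pref \<Rightarrow> 'i \<Rightarrow> ('ob \<Rightarrow> real) \<Rightarrow> ('ob \<Rightarrow> real) \<Rightarrow> bool" where
  "sd_geq Obj R i l l' \<longleftrightarrow>
     (\<forall>ob\<in>Obj. (\<Sum>ob'\<in>{ob'\<in>Obj. R i ob' ob}. l ob') \<ge> (\<Sum>ob'\<in>{ob'\<in>Obj. R i ob' ob}. l' ob'))"

(* Level k returns (T_k, L_k, T_0 \<union> ... \<union> T_k, L_1 \<union> ... \<union> L_k);
   Oc = Obj(d-1), pc = p(d-1).  Once L_k = {} all later levels are empty, so taking
   unions over all k is the same as stopping at the first empty L_k. *)
fun lev :: "'i set \<Rightarrow> 'ob set \<Rightarrow> ('i,'ob) pref \<Rightarrow> 'ob set \<Rightarrow> ('i,'ob) mat \<Rightarrow> nat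
             \<Rightarrow> 'ob set \<times> 'i set \<times> 'ob set \<times> 'i set" where
  "lev I Obj R Oc pc 0 = (Oc, {}, Oc, {})"
| "lev I Obj R Oc pc (Suc k) =
     (case lev I Obj R Oc pc k of (T, _, C, A) \<Rightarrow>
       let L = {i\<in>I. i \<notin> A \<and> (\<exists>ob\<in>T. \<exists>ob'\<in>Obj - C. pc i ob' > 0 \<and> indiff R i ob ob')};
           T' = {ob'\<in>Obj - C. \<exists>i\<in>L. pc i ob' > 0 \<and> (\<exists>ob\<in>T. indiff R i ob ob')}
       in (T', L, C \<union> T', A \<union> L))"

definition labT where "labT I Obj R Oc pc k = fst (lev I Obj R Oc pc k)"
definition labL where "labL I Obj R Oc pc k = fst (snd (lev I Obj R Oc pc k))"
definition labC where "labC I Obj R Oc pc k = fst (snd (snd (lev I Obj R Oc pc k)))"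

definition Lset where "Lset I Obj R Oc pc = (\<Union>k. labL I Obj R Oc pc k)"
definition Ttil where "Ttil I Obj R Oc pc = (\<Union>k. labT I Obj R Oc pc (Suc k))"
definition Obar where "Obar I Obj R Oc pc = Oc \<union> Ttil I Obj R Oc pc"
definition Otil where
  "Otil I Obj R Oc pc i =
     {ob'. \<exists>k. i \<in> labL I Obj R Oc pc (Suc k) \<and> ob' \<in> Obj - labC I Obj R Oc pc k \<and> pc i ob' > 0 \<and>
             (\<exists>ob\<in>labT I Obj R Oc pc k. indiff R i ob ob')}"

definition Iact where
  "Iact I Obj R \<omega>c pc Oc = Lset I Obj R Oc pc \<union> {i\<in>I. (\<Sum>ob\<in>Obj. \<omega>c i ob) > 0}"

definition Bset where
  "Bset I Obj R Oc pc i = {ob\<in>Obar I Obj R Oc pc. \<forall>ob'\<in>Obar I Obj R Oc pc. R i ob ob'}"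

definition Aset where
  "Aset I Obj R Oc pc i =
     Bset I Obj R Oc pc i \<inter> labT I Obj R Oc pc (LEAST k. Bset I Obj R Oc pc i \<inter> labT I Obj R Oc pc k \<noteq> {})"

definition admissible :: "'i set \<Rightarrow> 'ob set \<Rightarrow> ('i,'ob) pref \<Rightarrow> ('i,'ob) mat \<Rightarrow> ('i,'ob) mat \<Rightarrow> 'ob set
                          \<Rightarrow> ('i,'ob) choice \<Rightarrow> bool" where
  "admissible I Obj R \<omega>c pc Oc ch \<longleftrightarrow>
     (case ch of (lam, bet, gam) \<Rightarrow>
       let Ia = Iact I Obj R \<omega>c pc Oc; Ob = Obar I Obj R Oc pc; Tt = Ttil I Obj R Oc pc in
       (\<forall>i\<in>Ia. \<forall>ob\<in>Ob. lam i ob \<ge> 0) \<and>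
       (\<forall>ob\<in>Ob. (\<Sum>i\<in>Ia. lam i ob) = 1) \<and>
       (\<forall>i\<in>Ia. \<forall>ob\<in>Oc. lam i ob > 0 \<longrightarrow> \<omega>c i ob > 0) \<and>
       (\<forall>i\<in>Ia. \<forall>ob\<in>Tt. lam i ob > 0 \<longrightarrow> ob \<in> Otil I Obj R Oc pc i) \<and>
       (\<forall>i\<in>Ia. \<forall>ob\<in>Oc. 0 \<le> bet i ob \<and> bet i ob \<le> \<omega>c i ob) \<and>
       (\<forall>i\<in>Ia. \<forall>ob\<in>Ob. gam i ob \<ge> 0) \<and>
       (\<forall>i\<in>Ia. (\<Sum>ob\<in>Ob. gam i ob) = 1) \<and>
       (\<forall>i\<in>Ia. \<forall>ob\<in>Ob. gam i ob > 0 \<longrightarrow> ob \<in> Aset I Obj R Oc pc i))"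

(* x : values x_i on agents, y : values x_o on objects *)
definition feasible :: "'i set \<Rightarrow> 'ob set \<Rightarrow> ('i,'ob) pref \<Rightarrow> ('i,'ob) mat \<Rightarrow> ('i,'ob) mat \<Rightarrow> 'ob set
                        \<Rightarrow> ('i,'ob) choice \<Rightarrow> ('i \<Rightarrow> real) \<Rightarrow> ('ob \<Rightarrow> real) \<Rightarrow> bool" where
  "feasible I Obj R \<omega>c pc Oc ch x y \<longleftrightarrow>
     (case ch of (lam, bet, gam) \<Rightarrow>
       let Ia = Iact I Obj R \<omega>c pc Oc; Ob = Obar I Obj R Oc pc; Tt = Ttil I Obj R Oc pc in
       (\<forall>i\<in>Ia. x i \<ge> 0) \<and> (\<forall>ob\<in>Ob. y ob \<ge> 0) \<and>
       (\<forall>ob\<in>Ob. y ob = (\<Sum>i\<in>Ia. gam i ob * x i)) \<and>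
       (\<forall>i\<in>Ia. x i = (\<Sum>ob\<in>Ob. lam i ob * y ob)) \<and>
       (\<forall>i\<in>Ia. \<forall>ob\<in>Oc. lam i ob * y ob \<le> bet i ob) \<and>
       (\<forall>i\<in>Ia. \<forall>ob\<in>Tt. lam i ob * y ob \<le> pc i ob))"

definition max_solution where
  "max_solution I Obj R \<omega>c pc Oc ch x y \<longleftrightarrow>
     feasible I Obj R \<omega>c pc Oc ch x y \<and>
     (\<forall>x' y'. feasible I Obj R \<omega>c pc Oc ch x' y' \<longrightarrow>
        (\<forall>i\<in>Iact I Obj R \<omega>c pc Oc. x' i \<le> x i) \<and> (\<forall>ob\<in>Obar I Obj R Oc pc. y' ob \<le> y ob))"

definition update :: "'i set \<Rightarrow> 'ob set \<Rightarrow> ('i,'ob) pref \<Rightarrow> ('i,'ob) mat \<Rightarrow> ('i,'ob) mat \<Rightarrow> 'ob set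
                      \<Rightarrow> ('i,'ob) choice \<Rightarrow> ('i \<Rightarrow> real) \<Rightarrow> ('ob \<Rightarrow> real) \<Rightarrow> ('i,'ob) st" where
  "update I Obj R \<omega>c pc Oc ch x y =
     (case ch of (lam, bet, gam) \<Rightarrow>
       let Ia = Iact I Obj R \<omega>c pc Oc; Ob = Obar I Obj R Oc pc;
           \<omega>n = (\<lambda>i ob. if i \<in> Ia then (if ob \<in> Oc then \<omega>c i ob - lam i ob * y ob else 0) else \<omega>c i ob);
           pn = (\<lambda>i ob. if i \<in> Ia then
                   pc i ob - (if ob \<in> Otil I Obj R Oc pc i then lam i ob * y ob else 0)
                          + (if ob \<in> Ob then gam i ob * x i else 0)
                 else pc i ob)
       in (\<omega>n, pn, {ob\<in>Oc. (\<Sum>i\<in>I. \<omega>n i ob) > 0}))"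

definition fttc_step where
  "fttc_step I Obj R s ch s' \<longleftrightarrow>
     (case s of (\<omega>c, pc, Oc) \<Rightarrow>
        admissible I Obj R \<omega>c pc Oc ch \<and>
        (\<exists>x y. max_solution I Obj R \<omega>c pc Oc ch x y \<and> s' = update I Obj R \<omega>c pc Oc ch x y))"

(* st is a run of the FTTC procedure under rule M on problem (I,Obj,R,w) that stops after D steps;
   st d = (\<omega>(d), p(d), Obj(d)).  Existence of such a run is the standing assumption. *)
definition fttc_run :: "('i,'ob) rule \<Rightarrow> 'i set \<Rightarrow> 'ob set \<Rightarrow> ('i,'ob) pref \<Rightarrow> ('i,'ob) mat
                        \<Rightarrow> nat \<Rightarrow> (nat \<Rightarrow> ('i,'ob) st) \<Rightarrow> bool" where
  "fttc_run M I Obj R w D st \<longleftrightarrow>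
     st 0 = (w, (\<lambda>_ _. 0), Obj) \<and>
     (\<forall>d<D. snd (snd (st d)) \<noteq> {} \<and>
            fttc_step I Obj R (st d) (M I Obj R w (map st [0..<Suc d])) (st (Suc d))) \<and>
     snd (snd (st D)) = {}"

definition stepwise_EEET :: "('i,'ob) rule \<Rightarrow> bool" where
  "stepwise_EEET M \<longleftrightarrow>
     (\<forall>I Obj R w D st. fee_problem I Obj R w \<longrightarrow> fttc_run M I Obj R w D st \<longrightarrow>
        (\<forall>d<D. case st d of (\<omega>c, pc, Oc) \<Rightarrow>
           (\<forall>i\<in>Iact I Obj R \<omega>c pc Oc. \<forall>j\<in>Iact I Obj R \<omega>c pc Oc.
              (\<forall>ob\<in>Obj. \<omega>c i ob = \<omega>c j ob) \<longrightarrow>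
              (\<forall>ob\<in>Oc. fst (M I Obj R w (map st [0..<Suc d])) i ob =
                       fst (M I Obj R w (map st [0..<Suc d])) j ob))))"

definition ee_no_envy :: "'i set \<Rightarrow> 'ob set \<Rightarrow> ('i,'ob) pref \<Rightarrow> ('i,'ob) mat \<Rightarrow> ('i,'ob) mat \<Rightarrow> bool" where
  "ee_no_envy I Obj R w p \<longleftrightarrow>
     (\<forall>i\<in>I. \<forall>j\<in>I. (\<forall>ob\<in>Obj. w i ob = w j ob) \<longrightarrow>
        sd_geq Obj R i (p i) (p j) \<and> sd_geq Obj R j (p j) (p i))"

end

theory Submission
  imports Defs
begin

text \<open>
  Fix two agents i, j with equal endowments and an object o, and let U be the set of objects
  that i weakly prefers to o.  Along the run, every agent only holds objects that it weakly
  prefers to all still available objects (the set \<open>Obar\<close>), and \<open>Obar\<close> shrinks.  As long as U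
  meets \<open>Obar\<close>, everything i points at lies in U, so i's holding of U grows at least by the
  endowment i gives away; once U misses \<open>Obar\<close>, nobody's holding of U changes any more.
  Stepwise equal treatment keeps the remaining endowments of i and j equal, so at the first
  step k where U misses \<open>Obar\<close>, i's holding of U is at least the endowment i has given away
  so far; this equals the endowment j has given away, which is all that j holds.
\<close>

definition labA where "labA I Obj R Oc pc k = snd (snd (snd (lev I Obj R Oc pc k)))"

lemma lab_0: "labT I Obj R Oc pc 0 = Oc" "labL I Obj R Oc pc 0 = {}"
  "labC I Obj R Oc pc 0 = Oc" "labA I Obj R Oc pc 0 = {}"
  by (simp_all add: labT_def labL_def labC_def labA_def)

lemma lab_Suc:
  shows "labL I Obj R Oc pc (Suc k) = {i\<in>I. i \<notin> labA I Obj R Oc pc k \<and>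
      (\<exists>ob\<in>labT I Obj R Oc pc k. \<exists>ob'\<in>Obj - labC I Obj R Oc pc k. pc i ob' > 0 \<and> indiff R i ob ob')}"
  and "labT I Obj R Oc pc (Suc k) = {ob'\<in>Obj - labC I Obj R Oc pc k.
      \<exists>i\<in>labL I Obj R Oc pc (Suc k). pc i ob' > 0 \<and> (\<exists>ob\<in>labT I Obj R Oc pc k. indiff R i ob ob')}"
  and "labC I Obj R Oc pc (Suc k) = labC I Obj R Oc pc k \<union> labT I Obj R Oc pc (Suc k)"
  and "labA I Obj R Oc pc (Suc k) = labA I Obj R Oc pc k \<union> labL I Obj R Oc pc (Suc k)"
  by (cases "lev I Obj R Oc pc k"; simp add: labT_def labL_def labC_def labA_def Let_def)+

lemma labC_eq: "labC I Obj R Oc pc k = (\<Union>r\<le>k. labT I Obj R Oc pc r)"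
  by (induction k) (auto simp: lab_0 lab_Suc(3) atMost_Suc)

lemma labA_eq: "labA I Obj R Oc pc k = (\<Union>r<k. labL I Obj R Oc pc (Suc r))"
  by (induction k) (auto simp: lab_0 lab_Suc(4) lessThan_Suc)

lemma labL_subset: "labL I Obj R Oc pc k \<subseteq> I"
  by (cases k) (auto simp: lab_0 lab_Suc(1))

lemma labT_subset: "Oc \<subseteq> Obj \<Longrightarrow> labT I Obj R Oc pc k \<subseteq> Obj"
  by (cases k) (auto simp: lab_0 lab_Suc(2))

lemma Obar_eq: "Obar I Obj R Oc pc = (\<Union>k. labT I Obj R Oc pc k)"
proof
  show "Obar I Obj R Oc pc \<subseteq> (\<Union>k. labT I Obj R Oc pc k)"
    unfolding Obar_def Ttil_def using lab_0(1)[of I Obj R Oc pc] by blast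
  show "(\<Union>k. labT I Obj R Oc pc k) \<subseteq> Obar I Obj R Oc pc"
  proof
    fix ob assume "ob \<in> (\<Union>k. labT I Obj R Oc pc k)"
    then obtain k where "ob \<in> labT I Obj R Oc pc k" by blast
    then show "ob \<in> Obar I Obj R Oc pc"
      by (cases k) (auto simp: Obar_def Ttil_def lab_0)
  qed
qed

lemma labT_subset_Obar: "labT I Obj R Oc pc k \<subseteq> Obar I Obj R Oc pc"
  by (auto simp: Obar_eq)

lemma Obar_subset: "Oc \<subseteq> Obj \<Longrightarrow> Obar I Obj R Oc pc \<subseteq> Obj"
  unfolding Obar_eq using labT_subset[of Oc Obj I R pc] by blast

lemma Oc_subset_Obar: "Oc \<subseteq> Obar I Obj R Oc pc"
  by (simp add: Obar_def)

lemma Ttil_Int_Oc: "Ttil I Obj R Oc pc \<inter> Oc = {}"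
proof -
  have "Oc \<subseteq> labC I Obj R Oc pc k" for k
    using lab_0(1)[of I Obj R Oc pc] by (auto simp: labC_eq)
  then show ?thesis unfolding Ttil_def lab_Suc(2) by blast
qed

lemma Otil_subset_Ttil: "Otil I Obj R Oc pc i \<subseteq> Ttil I Obj R Oc pc"
  unfolding Otil_def Ttil_def lab_Suc(2) by blast

lemma Obar_empty: "Obar I Obj R {} pc = {}"
proof -
  have "labT I Obj R {} pc k = {}" for k
    by (induction k) (simp_all only: lab_0(1) lab_Suc(2); blast)+
  then show ?thesis by (simp add: Obar_eq)
qed

lemma Iact_subset: "Iact I Obj R \<omega>c pc Oc \<subseteq> I"
  unfolding Iact_def Lset_def using labL_subset by fastforce

text \<open>
  If a is not labelled up to the level of o2, it is labelled at the next level and ob is put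
  into \<open>Obar\<close> with it; if a was labelled earlier through some ob4, then ob4 \<sim> ob by
  transitivity, because a's holdings are weakly preferred to all of \<open>Obar\<close>.
\<close>
lemma indiff_held_mem_Obar:
  assumes OcO: "Oc \<subseteq> Obj" and aI: "a \<in> I" and obO: "ob \<in> Obj" and po: "pc a ob > 0"
    and o2: "o2 \<in> Obar I Obj R Oc pc" and ind: "indiff R a o2 ob"
    and top: "\<forall>o3. pc a o3 > 0 \<longrightarrow> (\<forall>o'\<in>Obar I Obj R Oc pc. R a o3 o')"
    and transR: "\<forall>a1\<in>Obj. \<forall>b\<in>Obj. \<forall>c\<in>Obj. R a a1 b \<longrightarrow> R a b c \<longrightarrow> R a a1 c"
  shows "ob \<in> Obar I Obj R Oc pc"
proof (rule ccontr)
  assume no: "ob \<notin> Obar I Obj R Oc pc"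
  then have oC: "ob \<notin> labC I Obj R Oc pc k" for k
    using labT_subset_Obar by (fastforce simp: labC_eq)
  from o2 obtain m where m: "o2 \<in> labT I Obj R Oc pc m" by (auto simp: Obar_eq)
  show False
  proof (cases "a \<in> labA I Obj R Oc pc m")
    case False
    then have "a \<in> labL I Obj R Oc pc (Suc m)" unfolding lab_Suc(1) using aI m obO oC po ind by blast
    then have "ob \<in> labT I Obj R Oc pc (Suc m)" unfolding lab_Suc(2) using m obO oC po ind by blast
    then show False using no labT_subset_Obar[of I Obj R Oc pc] by blast
  next
    case True
    then obtain r where aL: "a \<in> labL I Obj R Oc pc (Suc r)" by (auto simp: labA_eq)
    then obtain ob4 ob3 where ob4: "ob4 \<in> labT I Obj R Oc pc r" and ob3: "ob3 \<in> Obj"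
      and p3: "pc a ob3 > 0" and i43: "indiff R a ob4 ob3" unfolding lab_Suc(1) by blast
    have ob4O: "ob4 \<in> Obj" and o2O: "o2 \<in> Obj"
      using ob4 labT_subset[OF OcO] o2 Obar_subset[OF OcO] by blast+
    have "R a ob4 ob3" "R a o2 ob" using i43 ind unfolding indiff_def by auto
    moreover have "R a ob3 o2" using top p3 o2 by blast
    ultimately have "R a ob4 o2" using transR ob4O ob3 o2O by blast
    then have "R a ob4 ob" using transR ob4O o2O obO \<open>R a o2 ob\<close> by blast
    moreover have "R a ob ob4" using top po ob4 labT_subset_Obar[of I Obj R Oc pc] by blast
    ultimately have "indiff R a ob4 ob" unfolding indiff_def by blast
    then have "ob \<in> labT I Obj R Oc pc (Suc r)" unfolding lab_Suc(2) using aL ob4 obO oC po by blast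
    then show False using no labT_subset_Obar[of I Obj R Oc pc] by blast
  qed
qed

definition upper_contour :: "'ob set \<Rightarrow> ('i,'ob) pref \<Rightarrow> 'i \<Rightarrow> 'ob \<Rightarrow> 'ob set" where
  "upper_contour Obj R i ob = {ob'\<in>Obj. R i ob' ob}"

lemma sd_geq_iff_upper_contour:
  "sd_geq Obj R i l l' \<longleftrightarrow>
     (\<forall>ob\<in>Obj. (\<Sum>ob'\<in>upper_contour Obj R i ob. l' ob') \<le> (\<Sum>ob'\<in>upper_contour Obj R i ob. l ob'))"
  by (simp add: sd_geq_def upper_contour_def)

text \<open>One step of the procedure; only feasibility of (x, y), not maximality, is needed.\<close>
locale fttc_step_setting =
  fixes I :: "'i set" and Obj :: "'ob set" and R :: "('i,'ob) pref" and w :: "('i,'ob) mat"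
    and \<omega>c :: "('i,'ob) mat" and pc :: "('i,'ob) mat" and Oc :: "'ob set"
    and lam bet gam :: "('i,'ob) mat" and x :: "'i \<Rightarrow> real" and y :: "'ob \<Rightarrow> real"
  assumes fee: "fee_problem I Obj R w"
    and Oc_subset: "Oc \<subseteq> Obj"
    and \<omega>c_nonneg: "\<forall>i\<in>I. \<forall>ob\<in>Obj. \<omega>c i ob \<ge> 0"
    and \<omega>c_zero: "\<forall>i\<in>I. \<forall>ob\<in>Obj - Oc. \<omega>c i ob = 0"
    and pc_nonneg: "\<forall>i ob. pc i ob \<ge> 0"
    and pc_zero: "\<forall>i ob. ob \<notin> Obj \<longrightarrow> pc i ob = 0"
    and adm: "admissible I Obj R \<omega>c pc Oc (lam,bet,gam)"
    and fea: "feasible I Obj R \<omega>c pc Oc (lam,bet,gam) x y"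
begin

abbreviation "Ia \<equiv> Iact I Obj R \<omega>c pc Oc"
abbreviation "Ob \<equiv> Obar I Obj R Oc pc"
abbreviation "Tt \<equiv> Ttil I Obj R Oc pc"
abbreviation "Ot i \<equiv> Otil I Obj R Oc pc i"

definition "loss i ob = (if ob \<in> Ot i then lam i ob * y ob else 0)"
definition "gain i ob = (if ob \<in> Ob then gam i ob * x i else 0)"
definition "sold i = (\<Sum>ob\<in>Oc. lam i ob * y ob)"
definition "\<omega>n = (\<lambda>i ob. if i \<in> Ia then (if ob \<in> Oc then \<omega>c i ob - lam i ob * y ob else 0) else \<omega>c i ob)"
definition "pn = (\<lambda>i ob. if i \<in> Ia then pc i ob - loss i ob + gain i ob else pc i ob)"
definition "On = {ob\<in>Oc. (\<Sum>i\<in>I. \<omega>n i ob) > 0}"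

lemma update_eq: "update I Obj R \<omega>c pc Oc (lam,bet,gam) x y = (\<omega>n, pn, On)"
  unfolding update_def \<omega>n_def pn_def On_def loss_def gain_def Let_def prod.case by simp

lemma finite_I: "finite I" and finite_Obj: "finite Obj"
  using fee by (auto simp: fee_problem_def)

lemma R_trans: "i \<in> I \<Longrightarrow> a \<in> Obj \<Longrightarrow> b \<in> Obj \<Longrightarrow> c \<in> Obj \<Longrightarrow> R i a b \<Longrightarrow> R i b c \<Longrightarrow> R i a c"
  using fee unfolding fee_problem_def by blast

lemma lam_nonneg: "i \<in> Ia \<Longrightarrow> ob \<in> Ob \<Longrightarrow> lam i ob \<ge> 0"
  and lam_pos_endowed: "i \<in> Ia \<Longrightarrow> ob \<in> Oc \<Longrightarrow> lam i ob > 0 \<Longrightarrow> \<omega>c i ob > 0"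
  and lam_pos_Otil: "i \<in> Ia \<Longrightarrow> ob \<in> Tt \<Longrightarrow> lam i ob > 0 \<Longrightarrow> ob \<in> Ot i"
  and bet_le: "i \<in> Ia \<Longrightarrow> ob \<in> Oc \<Longrightarrow> bet i ob \<le> \<omega>c i ob"
  and gam_nonneg: "i \<in> Ia \<Longrightarrow> ob \<in> Ob \<Longrightarrow> gam i ob \<ge> 0"
  and gam_sum: "i \<in> Ia \<Longrightarrow> (\<Sum>ob\<in>Ob. gam i ob) = 1"
  and gam_pos_Aset: "i \<in> Ia \<Longrightarrow> ob \<in> Ob \<Longrightarrow> gam i ob > 0 \<Longrightarrow> ob \<in> Aset I Obj R Oc pc i"
  using adm unfolding admissible_def Let_def by auto

lemma x_nonneg: "i \<in> Ia \<Longrightarrow> x i \<ge> 0"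
  and y_nonneg: "ob \<in> Ob \<Longrightarrow> y ob \<ge> 0"
  and x_eq: "i \<in> Ia \<Longrightarrow> x i = (\<Sum>ob\<in>Ob. lam i ob * y ob)"
  and flow_le_bet: "i \<in> Ia \<Longrightarrow> ob \<in> Oc \<Longrightarrow> lam i ob * y ob \<le> bet i ob"
  and flow_le_pc: "i \<in> Ia \<Longrightarrow> ob \<in> Tt \<Longrightarrow> lam i ob * y ob \<le> pc i ob"
  using fea[unfolded feasible_def Let_def prod.case] by blast+

lemma Ob_subset: "Ob \<subseteq> Obj" by (rule Obar_subset[OF Oc_subset])
lemma Ob_eq: "Ob = Oc \<union> Tt" by (simp add: Obar_def)
lemma Ot_subset_Tt: "Ot i \<subseteq> Tt" by (rule Otil_subset_Ttil)
lemma Ot_subset_Ob: "Ot i \<subseteq> Ob" using Ot_subset_Tt by (auto simp: Obar_def)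
lemma finite_Tt: "finite Tt" using Ob_subset finite_Obj by (auto simp: Obar_def intro: finite_subset)
lemma finite_Oc: "finite Oc" using Oc_subset finite_Obj finite_subset by blast

lemma loss_nonneg: "i \<in> Ia \<Longrightarrow> loss i ob \<ge> 0"
  unfolding loss_def using Ot_subset_Ob[of i] lam_nonneg y_nonneg by auto

lemma gain_nonneg: "i \<in> Ia \<Longrightarrow> gain i ob \<ge> 0"
  unfolding gain_def using gam_nonneg x_nonneg by auto

lemma loss_le: "i \<in> Ia \<Longrightarrow> loss i ob \<le> pc i ob"
  unfolding loss_def using Ot_subset_Tt flow_le_pc pc_nonneg by auto

lemma On_subset: "On \<subseteq> Oc" by (auto simp: On_def)

lemma \<omega>n_nonneg: "\<forall>i\<in>I. \<forall>ob\<in>Obj. \<omega>n i ob \<ge> 0"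
proof (intro ballI)
  fix i ob assume i: "i \<in> I" and ob: "ob \<in> Obj"
  show "\<omega>n i ob \<ge> 0"
  proof (cases "i \<in> Ia \<and> ob \<in> Oc")
    case True
    then have "lam i ob * y ob \<le> \<omega>c i ob" using flow_le_bet bet_le by fastforce
    then show ?thesis using True by (simp add: \<omega>n_def)
  next
    case False then show ?thesis using \<omega>c_nonneg i ob by (auto simp: \<omega>n_def)
  qed
qed

lemma \<omega>n_zero: "\<forall>i\<in>I. \<forall>ob\<in>Obj - On. \<omega>n i ob = 0"
proof (intro ballI)
  fix i ob assume i: "i \<in> I" and ob: "ob \<in> Obj - On"
  show "\<omega>n i ob = 0"
  proof (cases "ob \<in> Oc")
    case False then show ?thesis using \<omega>c_zero i ob by (auto simp: \<omega>n_def)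
  next
    case True
    then have "(\<Sum>i\<in>I. \<omega>n i ob) \<le> 0" using ob by (auto simp: On_def)
    then show ?thesis
      using sum_nonneg_eq_0_iff[OF finite_I, of "\<lambda>i. \<omega>n i ob"] sum_nonneg[of I "\<lambda>i. \<omega>n i ob"]
        \<omega>n_nonneg i ob by fastforce
  qed
qed

lemma pn_nonneg: "\<forall>i ob. pn i ob \<ge> 0"
  unfolding pn_def using loss_le gain_nonneg pc_nonneg by (smt (verit))

lemma pn_zero: "\<forall>i ob. ob \<notin> Obj \<longrightarrow> pn i ob = 0"
  unfolding pn_def loss_def gain_def using pc_zero Ot_subset_Ob Ob_subset by auto

lemma sum_gain: "i \<in> Ia \<Longrightarrow> (\<Sum>ob\<in>Obj. gain i ob) = x i"
proof -
  assume i: "i \<in> Ia"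
  have "(\<Sum>ob\<in>Obj. gain i ob) = (\<Sum>ob\<in>Obj \<inter> Ob. gam i ob * x i)"
    unfolding gain_def by (rule sum.inter_restrict[OF finite_Obj, symmetric])
  also have "Obj \<inter> Ob = Ob" using Ob_subset by blast
  finally show ?thesis using gam_sum[OF i] by (simp add: sum_distrib_right[symmetric])
qed

lemma sum_loss: "i \<in> Ia \<Longrightarrow> (\<Sum>ob\<in>Obj. loss i ob) = (\<Sum>ob\<in>Tt. lam i ob * y ob)"
proof -
  assume i: "i \<in> Ia"
  have "(\<Sum>ob\<in>Obj. loss i ob) = (\<Sum>ob\<in>Obj \<inter> Ot i. lam i ob * y ob)"
    unfolding loss_def by (rule sum.inter_restrict[OF finite_Obj, symmetric])
  also have "Obj \<inter> Ot i = Ot i" using Ot_subset_Ob Ob_subset by blast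
  also have "(\<Sum>ob\<in>Ot i. lam i ob * y ob) = (\<Sum>ob\<in>Tt. lam i ob * y ob)"
  proof (rule sum.mono_neutral_left[OF finite_Tt Ot_subset_Tt], rule ballI)
    fix ob assume ob: "ob \<in> Tt - Ot i"
    then have "lam i ob \<ge> 0" using lam_nonneg[OF i] by (auto simp: Obar_def)
    moreover have "\<not> lam i ob > 0" using lam_pos_Otil[OF i] ob by blast
    ultimately show "lam i ob * y ob = 0" by simp
  qed
  finally show ?thesis .
qed

lemma x_eq_sold_plus_traded: "i \<in> Ia \<Longrightarrow> x i = sold i + (\<Sum>ob\<in>Tt. lam i ob * y ob)"
  unfolding x_eq sold_def Ob_eq
  by (rule sum.union_disjoint[OF finite_Oc finite_Tt]) (use Ttil_Int_Oc[of I Obj R Oc pc] in blast)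

lemma sum_\<omega>c: "i \<in> I \<Longrightarrow> (\<Sum>ob\<in>Obj. \<omega>c i ob) = (\<Sum>ob\<in>Oc. \<omega>c i ob)"
  by (rule sum.mono_neutral_right[OF finite_Obj Oc_subset]) (use \<omega>c_zero in blast)

lemma sum_\<omega>n: "i \<in> Ia \<Longrightarrow> (\<Sum>ob\<in>Obj. \<omega>n i ob) = (\<Sum>ob\<in>Obj. \<omega>c i ob) - sold i"
proof -
  assume i: "i \<in> Ia"
  have "(\<Sum>ob\<in>Obj. \<omega>n i ob) = (\<Sum>ob\<in>Obj. if ob \<in> Oc then \<omega>c i ob - lam i ob * y ob else 0)"
    using i by (simp add: \<omega>n_def)
  also have "\<dots> = (\<Sum>ob\<in>Obj \<inter> Oc. \<omega>c i ob - lam i ob * y ob)"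
    by (rule sum.inter_restrict[OF finite_Obj, symmetric])
  also have "Obj \<inter> Oc = Oc" using Oc_subset by blast
  finally show ?thesis using sum_\<omega>c i Iact_subset[of I Obj R \<omega>c pc Oc] by (auto simp: sold_def sum_subtractf)
qed

lemma holdings_conserved:
  "(\<Sum>ob\<in>Obj. pn i ob) + (\<Sum>ob\<in>Obj. \<omega>n i ob) = (\<Sum>ob\<in>Obj. pc i ob) + (\<Sum>ob\<in>Obj. \<omega>c i ob)"
proof (cases "i \<in> Ia")
  case True
  have "(\<Sum>ob\<in>Obj. pn i ob) = (\<Sum>ob\<in>Obj. pc i ob) - (\<Sum>ob\<in>Obj. loss i ob) + (\<Sum>ob\<in>Obj. gain i ob)"
    using True by (simp add: pn_def sum.distrib sum_subtractf)
  then show ?thesis using True sum_gain sum_loss x_eq_sold_plus_traded sum_\<omega>n by simp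
next
  case False then show ?thesis by (simp add: pn_def \<omega>n_def)
qed

lemma sum_outside_Obar_unchanged:
  assumes "U \<inter> Ob = {}"
  shows "(\<Sum>ob\<in>U. pn i ob) = (\<Sum>ob\<in>U. pc i ob)"
proof (rule sum.cong)
  fix ob assume "ob \<in> U"
  then have "ob \<notin> Ob" "ob \<notin> Ot i" using assms Ot_subset_Ob by blast+
  then show "pn i ob = pc i ob" by (simp add: pn_def loss_def gain_def)
qed simp

text \<open>
  Everything i points at is maximal in \<open>Obar\<close>, hence lies in any upper contour set meeting
  \<open>Obar\<close>; so i receives all of x i inside it, while it gives up only x i - sold i of its
  holdings.
\<close>
lemma upper_contour_gain:
  assumes i: "i \<in> I" and o0: "o0 \<in> Obj" and meets: "upper_contour Obj R i o0 \<inter> Ob \<noteq> {}"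
  shows "(\<Sum>ob\<in>upper_contour Obj R i o0. pc i ob) + ((\<Sum>ob\<in>Obj. \<omega>c i ob) - (\<Sum>ob\<in>Obj. \<omega>n i ob))
    \<le> (\<Sum>ob\<in>upper_contour Obj R i o0. pn i ob)"
proof (cases "i \<in> Ia")
  case False then show ?thesis by (simp add: pn_def \<omega>n_def)
next
  case True
  define U where "U = upper_contour Obj R i o0"
  have UO: "U \<subseteq> Obj" by (auto simp: U_def upper_contour_def)
  obtain o1 where o1: "o1 \<in> U" "o1 \<in> Ob" using meets by (auto simp: U_def)
  have "(\<Sum>ob\<in>U. pn i ob) = (\<Sum>ob\<in>U. pc i ob) - (\<Sum>ob\<in>U. loss i ob) + (\<Sum>ob\<in>U. gain i ob)"
    using True by (simp add: pn_def sum.distrib sum_subtractf)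
  moreover have "(\<Sum>ob\<in>U. loss i ob) \<le> (\<Sum>ob\<in>Obj. loss i ob)"
    by (rule sum_mono2[OF finite_Obj UO]) (use loss_nonneg True in blast)
  moreover have "(\<Sum>ob\<in>U. gain i ob) = (\<Sum>ob\<in>Obj. gain i ob)"
  proof (rule sum.mono_neutral_left[OF finite_Obj UO], rule ballI, rule ccontr)
    fix ob assume ob: "ob \<in> Obj - U" and "gain i ob \<noteq> 0"
    then have obO: "ob \<in> Ob" and "gam i ob \<noteq> 0" by (auto simp: gain_def split: if_splits)
    then have "ob \<in> Aset I Obj R Oc pc i" using gam_nonneg gam_pos_Aset True by force
    then have "R i ob o1" using o1 by (auto simp: Aset_def Bset_def)
    moreover have "R i o1 o0" using o1 by (simp add: U_def upper_contour_def)
    ultimately have "R i ob o0" using R_trans[OF i] o0 o1 Ob_subset obO by blast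
    then show False using ob by (simp add: U_def upper_contour_def)
  qed
  ultimately show ?thesis using True sum_gain sum_loss x_eq_sold_plus_traded sum_\<omega>n
    by (simp add: U_def)
qed

lemma new_holding_in_Aset:
  assumes "pn a ob > 0" and "\<not> pc a ob > 0"
  shows "ob \<in> Aset I Obj R Oc pc a" and "ob \<in> Ob"
proof -
  have a: "a \<in> Ia" using assms by (auto simp: pn_def split: if_splits)
  then have "gain a ob > 0" using assms loss_nonneg[OF a, of ob] by (simp add: pn_def)
  then have obO: "ob \<in> Ob" and "gam a ob \<noteq> 0" by (auto simp: gain_def split: if_splits)
  then have "gam a ob > 0" using gam_nonneg a by force
  then show "ob \<in> Aset I Obj R Oc pc a" "ob \<in> Ob" using gam_pos_Aset a obO by blast+
qed

context
  assumes holdings_top: "\<forall>a\<in>I. \<forall>ob. pc a ob > 0 \<longrightarrow> (\<forall>o'\<in>Ob. R a ob o')"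
begin

lemma Obar_next_subset: "Obar I Obj R On pn \<subseteq> Ob"
proof -
  have "labT I Obj R On pn k \<subseteq> Ob" for k
  proof (induction k)
    case 0 then show ?case using On_subset Oc_subset_Obar[of Oc I Obj R pc] by (simp add: lab_0)
  next
    case (Suc k)
    show ?case
    proof
      fix ob assume "ob \<in> labT I Obj R On pn (Suc k)"
      then obtain a o2 where obO: "ob \<in> Obj" and aL: "a \<in> labL I Obj R On pn (Suc k)"
        and pa: "pn a ob > 0" and o2: "o2 \<in> labT I Obj R On pn k" and ind: "indiff R a o2 ob"
        unfolding lab_Suc(2) by blast
      have aI: "a \<in> I" using aL labL_subset[of I Obj R On pn] by blast
      show "ob \<in> Ob"
      proof (cases "pc a ob > 0")
        case True
        have "o2 \<in> Ob" using o2 Suc.IH by blast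
        moreover have "\<forall>o3. pc a o3 > 0 \<longrightarrow> (\<forall>o'\<in>Ob. R a o3 o')" using holdings_top aI by blast
        moreover have "\<forall>a1\<in>Obj. \<forall>b\<in>Obj. \<forall>c\<in>Obj. R a a1 b \<longrightarrow> R a b c \<longrightarrow> R a a1 c"
          using R_trans[OF aI] by blast
        ultimately show ?thesis
          using indiff_held_mem_Obar[of Oc Obj a I ob pc o2 R] Oc_subset aI obO True ind by blast
      next
        case False then show ?thesis using new_holding_in_Aset pa by blast
      qed
    qed
  qed
  then show ?thesis by (auto simp: Obar_eq)
qed

lemma holdings_top_next: "\<forall>a\<in>I. \<forall>ob. pn a ob > 0 \<longrightarrow> (\<forall>o'\<in>Obar I Obj R On pn. R a ob o')"
proof (intro ballI allI impI)
  fix a ob o' assume a: "a \<in> I" and pa: "pn a ob > 0" and o': "o' \<in> Obar I Obj R On pn"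
  then have o'b: "o' \<in> Ob" using Obar_next_subset by blast
  show "R a ob o'"
  proof (cases "pc a ob > 0")
    case True then show ?thesis using holdings_top a o'b by blast
  next
    case False
    then have "ob \<in> Aset I Obj R Oc pc a" using new_holding_in_Aset pa by blast
    then show ?thesis using o'b by (auto simp: Aset_def Bset_def)
  qed
qed

end

lemma inactive_no_endowment:
  assumes "a \<in> I" and "a \<notin> Ia"
  shows "\<forall>ob\<in>Obj. \<omega>c a ob = 0"
proof -
  have "(\<Sum>ob\<in>Obj. \<omega>c a ob) \<le> 0" using assms by (auto simp: Iact_def)
  then show ?thesis
    using sum_nonneg_eq_0_iff[OF finite_Obj, of "\<omega>c a"] sum_nonneg[of Obj "\<omega>c a"] \<omega>c_nonneg assms(1)
    by fastforce
qed

lemma no_endowment_next: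
  assumes "\<forall>ob\<in>Obj. \<omega>c a ob = 0"
  shows "\<forall>ob\<in>Obj. \<omega>n a ob = 0"
proof
  fix ob assume ob: "ob \<in> Obj"
  show "\<omega>n a ob = 0"
  proof (cases "a \<in> Ia \<and> ob \<in> Oc")
    case True
    then have "lam a ob \<ge> 0" using lam_nonneg Oc_subset_Obar[of Oc I Obj R pc] by blast
    moreover have "\<not> lam a ob > 0" using lam_pos_endowed True assms ob by force
    ultimately show ?thesis using True assms ob by (simp add: \<omega>n_def)
  next
    case False then show ?thesis using assms ob by (auto simp: \<omega>n_def)
  qed
qed

text \<open>
  Equal endowments are either both positive, so that both agents are active and stepwise
  equal treatment applies, or both zero, which persists.
\<close>
lemma equal_endowments_next:
  assumes i: "i \<in> I" and j: "j \<in> I" and eq: "\<forall>ob\<in>Obj. \<omega>c i ob = \<omega>c j ob"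
    and equal_treatment: "i \<in> Ia \<Longrightarrow> j \<in> Ia \<Longrightarrow> \<forall>ob\<in>Oc. lam i ob = lam j ob"
  shows "\<forall>ob\<in>Obj. \<omega>n i ob = \<omega>n j ob"
proof (cases "i \<in> Ia \<and> j \<in> Ia")
  case True
  then show ?thesis using equal_treatment eq by (auto simp: \<omega>n_def)
next
  case False
  then have "\<forall>ob\<in>Obj. \<omega>c i ob = 0" "\<forall>ob\<in>Obj. \<omega>c j ob = 0"
    using inactive_no_endowment i j eq by metis+
  then show ?thesis using no_endowment_next by metis
qed

end

locale fttc_run_setting =
  fixes M :: "('i,'ob) rule" and I :: "'i set" and Obj :: "'ob set" and R :: "('i,'ob) pref"
    and w :: "('i,'ob) mat" and D :: nat and st :: "nat \<Rightarrow> ('i,'ob) st"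
  assumes EEET: "stepwise_EEET M"
    and fee: "fee_problem I Obj R w"
    and run: "fttc_run M I Obj R w D st"
begin

abbreviation "\<omega> d \<equiv> fst (st d)"
abbreviation "p d \<equiv> fst (snd (st d))"
abbreviation "avail d \<equiv> snd (snd (st d))"
abbreviation "Ob d \<equiv> Obar I Obj R (avail d) (p d)"

lemma run_init: "\<omega> 0 = w" "p 0 = (\<lambda>_ _. 0)" "avail 0 = Obj"
  using run by (auto simp: fttc_run_def)

lemma run_final: "avail D = {}"
  using run by (auto simp: fttc_run_def)

lemma finite_Obj: "finite Obj"
  using fee by (simp add: fee_problem_def)

lemma run_step_choice:
  assumes "d < D"
  obtains lam bet gam x y where "M I Obj R w (map st [0..<Suc d]) = (lam,bet,gam)"
    "admissible I Obj R (\<omega> d) (p d) (avail d) (lam,bet,gam)"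
    "feasible I Obj R (\<omega> d) (p d) (avail d) (lam,bet,gam) x y"
    "st (Suc d) = update I Obj R (\<omega> d) (p d) (avail d) (lam,bet,gam) x y"
proof -
  obtain lam bet gam where ch: "M I Obj R w (map st [0..<Suc d]) = (lam,bet,gam)"
    by (metis prod_cases3)
  have "fttc_step I Obj R (st d) (M I Obj R w (map st [0..<Suc d])) (st (Suc d))"
    using run assms by (auto simp: fttc_run_def)
  then have "fttc_step I Obj R (\<omega> d, p d, avail d) (lam,bet,gam) (st (Suc d))"
    using ch by simp
  then show ?thesis using that ch unfolding fttc_step_def max_solution_def by auto
qed

definition run_invariant :: "nat \<Rightarrow> bool" where
  "run_invariant d \<longleftrightarrow> avail d \<subseteq> Obj \<and> (\<forall>i\<in>I. \<forall>ob\<in>Obj. \<omega> d i ob \<ge> 0) \<and>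
     (\<forall>i\<in>I. \<forall>ob\<in>Obj - avail d. \<omega> d i ob = 0) \<and> (\<forall>i ob. p d i ob \<ge> 0) \<and>
     (\<forall>i ob. ob \<notin> Obj \<longrightarrow> p d i ob = 0) \<and>
     (\<forall>a\<in>I. \<forall>ob. p d a ob > 0 \<longrightarrow> (\<forall>o'\<in>Ob d. R a ob o'))"

lemma step_setting_if_invariant:
  assumes "run_invariant d"
    and "admissible I Obj R (\<omega> d) (p d) (avail d) (lam,bet,gam)"
    and "feasible I Obj R (\<omega> d) (p d) (avail d) (lam,bet,gam) x y"
  shows "fttc_step_setting I Obj R w (\<omega> d) (p d) (avail d) lam bet gam x y"
  using fee assms unfolding run_invariant_def by unfold_locales auto

lemma run_invariant_holds: "d \<le> D \<Longrightarrow> run_invariant d"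
proof (induction d)
  case 0
  show ?case using fee run_init unfolding run_invariant_def fee_problem_def by auto
next
  case (Suc d)
  then have dD: "d < D" and inv: "run_invariant d" by auto
  obtain lam bet gam x y where "M I Obj R w (map st [0..<Suc d]) = (lam,bet,gam)"
    and adm: "admissible I Obj R (\<omega> d) (p d) (avail d) (lam,bet,gam)"
    and fea: "feasible I Obj R (\<omega> d) (p d) (avail d) (lam,bet,gam) x y"
    and next_st: "st (Suc d) = update I Obj R (\<omega> d) (p d) (avail d) (lam,bet,gam) x y"
    by (rule run_step_choice[OF dD])
  interpret S: fttc_step_setting I Obj R w "\<omega> d" "p d" "avail d" lam bet gam x y
    by (rule step_setting_if_invariant[OF inv adm fea])
  have top: "\<forall>a\<in>I. \<forall>ob. p d a ob > 0 \<longrightarrow> (\<forall>o'\<in>Ob d. R a ob o')"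
    using inv unfolding run_invariant_def by blast
  show ?case
    unfolding run_invariant_def next_st S.update_eq fst_conv snd_conv
    using S.On_subset S.Oc_subset S.\<omega>n_nonneg S.\<omega>n_zero S.pn_nonneg S.pn_zero
      S.holdings_top_next[OF top] by blast
qed

lemma run_step:
  assumes "d < D"
  obtains lam bet gam x y where "M I Obj R w (map st [0..<Suc d]) = (lam,bet,gam)"
    and "fttc_step_setting I Obj R w (\<omega> d) (p d) (avail d) lam bet gam x y"
    and "st (Suc d) = update I Obj R (\<omega> d) (p d) (avail d) (lam,bet,gam) x y"
proof -
  obtain lam bet gam x y where ch: "M I Obj R w (map st [0..<Suc d]) = (lam,bet,gam)"
    and adm: "admissible I Obj R (\<omega> d) (p d) (avail d) (lam,bet,gam)"
    and fea: "feasible I Obj R (\<omega> d) (p d) (avail d) (lam,bet,gam) x y"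
    and next_st: "st (Suc d) = update I Obj R (\<omega> d) (p d) (avail d) (lam,bet,gam) x y"
    by (rule run_step_choice[OF assms])
  have "run_invariant d" using run_invariant_holds assms by simp
  from step_setting_if_invariant[OF this adm fea] show ?thesis by (rule that[OF ch _ next_st])
qed

lemma holdings_nonneg: "d \<le> D \<Longrightarrow> p d i ob \<ge> 0"
  using run_invariant_holds unfolding run_invariant_def by blast

lemma holdings_top: "d \<le> D \<Longrightarrow> \<forall>a\<in>I. \<forall>ob. p d a ob > 0 \<longrightarrow> (\<forall>o'\<in>Ob d. R a ob o')"
  using run_invariant_holds unfolding run_invariant_def by blast

lemma Obar_shrinks: "d < D \<Longrightarrow> Ob (Suc d) \<subseteq> Ob d"
proof -
  assume dD: "d < D"
  obtain lam bet gam x y where "M I Obj R w (map st [0..<Suc d]) = (lam,bet,gam)"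
    and step: "fttc_step_setting I Obj R w (\<omega> d) (p d) (avail d) lam bet gam x y"
    and next_st: "st (Suc d) = update I Obj R (\<omega> d) (p d) (avail d) (lam,bet,gam) x y"
    by (rule run_step[OF dD])
  interpret S: fttc_step_setting I Obj R w "\<omega> d" "p d" "avail d" lam bet gam x y by (rule step)
  show ?thesis
    unfolding next_st S.update_eq fst_conv snd_conv
    using S.Obar_next_subset holdings_top[of d] dD by simp
qed

lemma holdings_conserved_step:
  assumes dD: "d < D"
  shows "(\<Sum>ob\<in>Obj. p (Suc d) i ob) + (\<Sum>ob\<in>Obj. \<omega> (Suc d) i ob)
    = (\<Sum>ob\<in>Obj. p d i ob) + (\<Sum>ob\<in>Obj. \<omega> d i ob)"
proof -
  obtain lam bet gam x y where "M I Obj R w (map st [0..<Suc d]) = (lam,bet,gam)"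
    and step: "fttc_step_setting I Obj R w (\<omega> d) (p d) (avail d) lam bet gam x y"
    and next_st: "st (Suc d) = update I Obj R (\<omega> d) (p d) (avail d) (lam,bet,gam) x y"
    by (rule run_step[OF dD])
  interpret S: fttc_step_setting I Obj R w "\<omega> d" "p d" "avail d" lam bet gam x y by (rule step)
  show ?thesis unfolding next_st S.update_eq fst_conv snd_conv by (rule S.holdings_conserved)
qed

lemma sum_outside_Obar_step:
  assumes dD: "d < D" and "U \<inter> Ob d = {}"
  shows "(\<Sum>ob\<in>U. p (Suc d) i ob) = (\<Sum>ob\<in>U. p d i ob)"
proof -
  obtain lam bet gam x y where "M I Obj R w (map st [0..<Suc d]) = (lam,bet,gam)"
    and step: "fttc_step_setting I Obj R w (\<omega> d) (p d) (avail d) lam bet gam x y"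
    and next_st: "st (Suc d) = update I Obj R (\<omega> d) (p d) (avail d) (lam,bet,gam) x y"
    by (rule run_step[OF dD])
  interpret S: fttc_step_setting I Obj R w "\<omega> d" "p d" "avail d" lam bet gam x y by (rule step)
  show ?thesis unfolding next_st S.update_eq fst_conv snd_conv
    by (rule S.sum_outside_Obar_unchanged) (rule assms(2))
qed

lemma upper_contour_gain_step:
  assumes dD: "d < D" and "i \<in> I" and "o0 \<in> Obj" and "upper_contour Obj R i o0 \<inter> Ob d \<noteq> {}"
  shows "(\<Sum>ob\<in>upper_contour Obj R i o0. p d i ob) + ((\<Sum>ob\<in>Obj. \<omega> d i ob) - (\<Sum>ob\<in>Obj. \<omega> (Suc d) i ob))
    \<le> (\<Sum>ob\<in>upper_contour Obj R i o0. p (Suc d) i ob)"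
proof -
  obtain lam bet gam x y where "M I Obj R w (map st [0..<Suc d]) = (lam,bet,gam)"
    and step: "fttc_step_setting I Obj R w (\<omega> d) (p d) (avail d) lam bet gam x y"
    and next_st: "st (Suc d) = update I Obj R (\<omega> d) (p d) (avail d) (lam,bet,gam) x y"
    by (rule run_step[OF dD])
  interpret S: fttc_step_setting I Obj R w "\<omega> d" "p d" "avail d" lam bet gam x y by (rule step)
  from S.upper_contour_gain[OF assms(2-4)]
  show ?thesis unfolding next_st S.update_eq fst_conv snd_conv .
qed

lemma equal_treatment:
  assumes dD: "d < D" and ch: "M I Obj R w (map st [0..<Suc d]) = (lam,bet,gam)"
    and "i \<in> Iact I Obj R (\<omega> d) (p d) (avail d)" and "j \<in> Iact I Obj R (\<omega> d) (p d) (avail d)"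
    and "\<forall>ob\<in>Obj. \<omega> d i ob = \<omega> d j ob"
  shows "\<forall>ob\<in>avail d. lam i ob = lam j ob"
proof -
  have "case st d of (\<omega>c, pc, Oc) \<Rightarrow>
      \<forall>i\<in>Iact I Obj R \<omega>c pc Oc. \<forall>j\<in>Iact I Obj R \<omega>c pc Oc. (\<forall>ob\<in>Obj. \<omega>c i ob = \<omega>c j ob) \<longrightarrow>
        (\<forall>ob\<in>Oc. fst (M I Obj R w (map st [0..<Suc d])) i ob = fst (M I Obj R w (map st [0..<Suc d])) j ob)"
    using EEET dD unfolding stepwise_EEET_def
    by (elim allE[of _ I] allE[of _ Obj] allE[of _ R] allE[of _ w] allE[of _ D] allE[of _ st])
      (simp add: fee run)
  then have "\<forall>i\<in>Iact I Obj R (\<omega> d) (p d) (avail d). \<forall>j\<in>Iact I Obj R (\<omega> d) (p d) (avail d).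
      (\<forall>ob\<in>Obj. \<omega> d i ob = \<omega> d j ob) \<longrightarrow> (\<forall>ob\<in>avail d. lam i ob = lam j ob)"
    by (simp only: split_beta ch fst_conv)
  then show ?thesis using assms(3-5) by blast
qed

lemma equal_endowments_step:
  assumes dD: "d < D" and i: "i \<in> I" and j: "j \<in> I" and eq: "\<forall>ob\<in>Obj. \<omega> d i ob = \<omega> d j ob"
  shows "\<forall>ob\<in>Obj. \<omega> (Suc d) i ob = \<omega> (Suc d) j ob"
proof -
  obtain lam bet gam x y where ch: "M I Obj R w (map st [0..<Suc d]) = (lam,bet,gam)"
    and step: "fttc_step_setting I Obj R w (\<omega> d) (p d) (avail d) lam bet gam x y"
    and next_st: "st (Suc d) = update I Obj R (\<omega> d) (p d) (avail d) (lam,bet,gam) x y"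
    by (rule run_step[OF dD])
  interpret S: fttc_step_setting I Obj R w "\<omega> d" "p d" "avail d" lam bet gam x y by (rule step)
  from S.equal_endowments_next[OF i j eq equal_treatment[OF dD ch _ _ eq]]
  show ?thesis unfolding next_st S.update_eq fst_conv .
qed

lemma holdings_plus_endowment:
  "d \<le> D \<Longrightarrow> (\<Sum>ob\<in>Obj. p d i ob) + (\<Sum>ob\<in>Obj. \<omega> d i ob) = (\<Sum>ob\<in>Obj. w i ob)"
proof (induction d)
  case (Suc d) then show ?case using holdings_conserved_step[of d i] by simp
qed (simp add: run_init)

lemma equal_endowments:
  "d \<le> D \<Longrightarrow> i \<in> I \<Longrightarrow> j \<in> I \<Longrightarrow> \<forall>ob\<in>Obj. w i ob = w j ob \<Longrightarrow> \<forall>ob\<in>Obj. \<omega> d i ob = \<omega> d j ob"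
proof (induction d)
  case (Suc d) then show ?case using equal_endowments_step[of d i j] by simp
qed (simp add: run_init)

lemma Obar_antimono: "k \<le> d \<Longrightarrow> d \<le> D \<Longrightarrow> Ob d \<subseteq> Ob k"
proof (induction d rule: dec_induct)
  case (step n)
  then show ?case using Obar_shrinks[of n] by auto
qed simp

lemma sum_outside_Obar_frozen:
  assumes "k \<le> d" and "d \<le> D" and "U \<inter> Ob k = {}"
  shows "(\<Sum>ob\<in>U. p d i ob) = (\<Sum>ob\<in>U. p k i ob)"
  using assms
proof (induction d rule: dec_induct)
  case (step n)
  then have "U \<inter> Ob n = {}" using Obar_antimono[of k n] by auto
  then show ?case using step sum_outside_Obar_step[of n U i] by simp
qed simp

lemma upper_contour_lower_bound:
  assumes "k \<le> D" and "i \<in> I" and "o0 \<in> Obj"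
    and "\<forall>d<k. upper_contour Obj R i o0 \<inter> Ob d \<noteq> {}"
  shows "(\<Sum>ob\<in>Obj. w i ob) - (\<Sum>ob\<in>Obj. \<omega> k i ob) \<le> (\<Sum>ob\<in>upper_contour Obj R i o0. p k i ob)"
  using assms
proof (induction k)
  case 0 then show ?case by (simp add: run_init)
next
  case (Suc k)
  then have "(\<Sum>ob\<in>Obj. w i ob) - (\<Sum>ob\<in>Obj. \<omega> k i ob) \<le> (\<Sum>ob\<in>upper_contour Obj R i o0. p k i ob)"
    by simp
  moreover have "(\<Sum>ob\<in>upper_contour Obj R i o0. p k i ob)
      + ((\<Sum>ob\<in>Obj. \<omega> k i ob) - (\<Sum>ob\<in>Obj. \<omega> (Suc k) i ob))
    \<le> (\<Sum>ob\<in>upper_contour Obj R i o0. p (Suc k) i ob)"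
    using upper_contour_gain_step[of k i o0] Suc.prems by simp
  ultimately show ?case by simp
qed

lemma upper_contour_sum_ge:
  assumes i: "i \<in> I" and j: "j \<in> I" and wij: "\<forall>ob\<in>Obj. w i ob = w j ob" and o0: "o0 \<in> Obj"
  shows "(\<Sum>ob\<in>upper_contour Obj R i o0. p D j ob) \<le> (\<Sum>ob\<in>upper_contour Obj R i o0. p D i ob)"
proof -
  define U where "U = upper_contour Obj R i o0"
  define k where "k = (LEAST d. U \<inter> Ob d = {})"
  have "U \<inter> Ob D = {}" by (simp add: run_final Obar_empty)
  then have kD: "k \<le> D" and frozen: "U \<inter> Ob k = {}"
    unfolding k_def by (rule Least_le, rule LeastI)
  have meets: "\<forall>d<k. U \<inter> Ob d \<noteq> {}"
    unfolding k_def using not_less_Least by blast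
  have "(\<Sum>ob\<in>U. p D j ob) = (\<Sum>ob\<in>U. p k j ob)"
    by (rule sum_outside_Obar_frozen[OF kD order_refl frozen])
  also have "\<dots> \<le> (\<Sum>ob\<in>Obj. p k j ob)"
    by (rule sum_mono2[OF finite_Obj]) (auto simp: U_def upper_contour_def holdings_nonneg kD)
  also have "\<dots> = (\<Sum>ob\<in>Obj. w j ob) - (\<Sum>ob\<in>Obj. \<omega> k j ob)"
    using holdings_plus_endowment[OF kD, of j] by simp
  also have "\<dots> = (\<Sum>ob\<in>Obj. w i ob) - (\<Sum>ob\<in>Obj. \<omega> k i ob)"
    using wij equal_endowments[OF kD i j wij] by simp
  also have "\<dots> \<le> (\<Sum>ob\<in>U. p k i ob)"
    unfolding U_def by (rule upper_contour_lower_bound[OF kD i o0 meets[unfolded U_def]])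
  also have "\<dots> = (\<Sum>ob\<in>U. p D i ob)"
    by (rule sum_outside_Obar_frozen[OF kD order_refl frozen, symmetric])
  finally show ?thesis unfolding U_def .
qed

end

theorem proposition2:
  fixes M :: "('i,'ob) rule"
    and I :: "'i set" and Obj :: "'ob set" and R :: "('i,'ob) pref" and w :: "('i,'ob) mat"
    and D :: nat and st :: "nat \<Rightarrow> ('i,'ob) st"
  assumes "stepwise_EEET M"
    and "fee_problem I Obj R w"
    and "fttc_run M I Obj R w D st"
  shows "ee_no_envy I Obj R w (fst (snd (st D)))"
proof -
  interpret fttc_run_setting M I Obj R w D st
    using assms by unfold_locales
  show ?thesis
    unfolding ee_no_envy_def sd_geq_iff_upper_contour
  proof (intro ballI impI conjI)
    fix i j ob assume "i \<in> I" "j \<in> I" "\<forall>ob\<in>Obj. w i ob = w j ob" "ob \<in> Obj"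
    then show "(\<Sum>ob'\<in>upper_contour Obj R i ob. p D j ob') \<le> (\<Sum>ob'\<in>upper_contour Obj R i ob. p D i ob')"
      and "(\<Sum>ob'\<in>upper_contour Obj R j ob. p D i ob') \<le> (\<Sum>ob'\<in>upper_contour Obj R j ob. p D j ob')"
      using upper_contour_sum_ge by simp_all
  qed
qed

end
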